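(* Let $q$ be a prime power, $s\geq1$, $m\geq1$, $n=q^{s-1}$, and let $G$ be the $s\times n$ matrix over $\mathbb{F}_q$ whose first row is all ones and whose columns, restricted to the last $s-1$ rows, run through all vectors of $\mathbb{F}_q^{s-1}$. Let $P_i\in\mathrm{PG}(s-1,q)$ be the projective point of the $i$-th column of $G$; these are exactly the points of $\mathrm{PG}(s-1,q)$ outside the hyperplane $H: X_1=0$, and we identify $\mathrm{PG}(s-1,q)\setminus H$ with the affine space $\mathrm{AG}(s-1,q)$. Let $\mathcal{RM}_q(1,s-1)$ be the code over $\mathbb{F}_q$ generated by $G$. If $\mathbf{c}$ is a word of the extension code $\mathcal{RM}_q(1,s-1)\otimes\mathbb{F}_{q^m}$ of Hamming weight $q^{s-1}-q^{s-1-m}$, then the set $\{P_i: i\in\{1,\dots,n\}\setminus\mathrm{supp}(\mathbf{c})\}$ is exactly the set of all points of some affine subspace of $\mathrm{AG}(s-1,q)$ of codimension $m$.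
   Context: The extension code $C\otimes\mathbb{F}_{q^m}$ of a linear code $C\subseteq\mathbb{F}_q^n$ is the $\mathbb{F}_{q^m}$-linear span of $C$ in $\mathbb{F}_{q^m}^n$. The support $\mathrm{supp}(\mathbf{c})$ of a word is the set of its nonzero coordinates. Under the identification, the affine subspaces of $\mathrm{AG}(s-1,q)$ of codimension $m$ are the sets $\Pi\setminus H$ for projective subspaces $\Pi$ of codimension $m$ not contained in $H$. *)

theory Defs
  imports Complex_Main
begin

text \<open>A subfield F of the (finite) field 'K. Here 'K plays the role of F_{q^m} and F of F_q.\<close>
definition is_subfield :: "'K::field set \<Rightarrow> bool" where
  "is_subfield F \<longleftrightarrow> 0 \<in> F \<and> 1 \<in> F \<and>
     (\<forall>x\<in>F. \<forall>y\<in>F. x + y \<in> F \<and> x * y \<in> F) \<and>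
     (\<forall>x\<in>F. - x \<in> F \<and> inverse x \<in> F)"

text \<open>Points of AG(d,q) = F_q^d, as vectors indexed by {0..<d}, inside 'K (zero outside).\<close>
definition AGpts :: "'K::field set \<Rightarrow> nat \<Rightarrow> (nat \<Rightarrow> 'K) set" where
  "AGpts F d = {v. (\<forall>i<d. v i \<in> F) \<and> (\<forall>i\<ge>d. v i = 0)}"

text \<open>Entry (j,v) of the generator matrix G: row 0 is all ones, rows 1..s-1 give the
  coordinates of the affine point v (columns are indexed by the points v of AG(s-1,q)).\<close>
definition Gmat :: "nat \<Rightarrow> (nat \<Rightarrow> 'K::field) \<Rightarrow> 'K" where
  "Gmat j v = (if j = 0 then 1 else v (j - 1))"

text \<open>RM_q(1,s-1): the F_q-row space of G. Words are functions on the columns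
  (= points of AG(s-1,q)), extended by 0 outside.\<close>
definition RM_code :: "'K::field set \<Rightarrow> nat \<Rightarrow> ((nat \<Rightarrow> 'K) \<Rightarrow> 'K) set" where
  "RM_code F s = {c. \<exists>a. (\<forall>j<s. a j \<in> F) \<and>
      c = (\<lambda>v. if v \<in> AGpts F (s - 1) then (\<Sum>j<s. a j * Gmat j v) else 0)}"

definition ext_code :: "('p \<Rightarrow> 'K::field) set \<Rightarrow> ('p \<Rightarrow> 'K) set" where
  "ext_code C = {c. \<exists>S lam. finite S \<and> S \<subseteq> C \<and> c = (\<lambda>v. \<Sum>x\<in>S. lam x * x v)}"

definition hweight :: "'p set \<Rightarrow> ('p \<Rightarrow> 'K::zero) \<Rightarrow> nat" where
  "hweight P c = card {v \<in> P. c v \<noteq> 0}"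

definition affine_subspace_codim ::
    "'K::field set \<Rightarrow> nat \<Rightarrow> nat \<Rightarrow> (nat \<Rightarrow> 'K) set \<Rightarrow> bool" where
  "affine_subspace_codim F d m A \<longleftrightarrow> m \<le> d \<and>
     (\<exists>p u. p \<in> AGpts F d \<and> (\<forall>i<d - m. u i \<in> AGpts F d) \<and>
        (\<forall>t. (\<forall>i<d - m. t i \<in> F) \<and> (\<lambda>j. \<Sum>i<d - m. t i * u i j) = (\<lambda>j. 0)
              \<longrightarrow> (\<forall>i<d - m. t i = 0)) \<and>
        A = {(\<lambda>j. p j + (\<Sum>i<d - m. t i * u i j)) | t. \<forall>i<d - m. t i \<in> F})"

end

theory Submission
  imports Defs "HOL-Library.FuncSet"
begin

text \<open>
  Restricted to the points of AG(s-1,q) = F_q^(s-1), a word of the extension code is an affine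
  form v \<mapsto> b0 + \<beta>\<cdot>v with coefficients in F_(q^m). The weight hypothesis says exactly that its
  zero set Z has q^(s-1-m) points (in particular m \<le> s-1, since a weight is an integer).
  Z is nonempty, so Z = p + W with W the zero set of the form v \<mapsto> \<beta>\<cdot>v on F_q^(s-1); this W
  is an F_q-subspace, and a basis of W has s-1-m vectors because |W| = |Z|.
\<close>

lemma is_subfield_zero: "is_subfield F \<Longrightarrow> 0 \<in> F"
  by (simp add: is_subfield_def)

lemma is_subfield_one: "is_subfield F \<Longrightarrow> 1 \<in> F"
  by (simp add: is_subfield_def)

lemma is_subfield_add: "is_subfield F \<Longrightarrow> x \<in> F \<Longrightarrow> y \<in> F \<Longrightarrow> x + y \<in> F"
  by (simp add: is_subfield_def)

lemma is_subfield_mult: "is_subfield F \<Longrightarrow> x \<in> F \<Longrightarrow> y \<in> F \<Longrightarrow> x * y \<in> F"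
  by (simp add: is_subfield_def)

lemma is_subfield_uminus: "is_subfield F \<Longrightarrow> x \<in> F \<Longrightarrow> - x \<in> F"
  by (simp add: is_subfield_def)

lemma is_subfield_inverse: "is_subfield F \<Longrightarrow> x \<in> F \<Longrightarrow> inverse x \<in> F"
  by (simp add: is_subfield_def)

lemma is_subfield_diff: "is_subfield F \<Longrightarrow> x \<in> F \<Longrightarrow> y \<in> F \<Longrightarrow> x - y \<in> F"
  by (metis diff_conv_add_uminus is_subfield_add is_subfield_uminus)

lemma card_is_subfield_ge_2:
  assumes "is_subfield F" and "finite F"
  shows "2 \<le> card F"
proof -
  have "{0, 1} \<subseteq> F"
    using assms(1) by (simp add: is_subfield_zero is_subfield_one)
  from card_mono[OF assms(2) this] show ?thesis
    by simp
qed

subsection \<open>Linear algebra over a subfield\<close>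

definition lin_comb :: "(nat \<Rightarrow> 'K) \<Rightarrow> (nat \<Rightarrow> nat \<Rightarrow> 'K::field) \<Rightarrow> nat \<Rightarrow> nat \<Rightarrow> 'K" where
  "lin_comb t u k = (\<lambda>j. \<Sum>i<k. t i * u i j)"

definition span_over :: "'K::field set \<Rightarrow> (nat \<Rightarrow> nat \<Rightarrow> 'K) \<Rightarrow> nat \<Rightarrow> (nat \<Rightarrow> 'K) set" where
  "span_over F u k = {lin_comb t u k | t. \<forall>i<k. t i \<in> F}"

definition independent_over :: "'K::field set \<Rightarrow> (nat \<Rightarrow> nat \<Rightarrow> 'K) \<Rightarrow> nat \<Rightarrow> bool" where
  "independent_over F u k \<longleftrightarrow>
     (\<forall>t. (\<forall>i<k. t i \<in> F) \<and> lin_comb t u k = (\<lambda>j. 0) \<longrightarrow> (\<forall>i<k. t i = 0))"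

definition subspace_over :: "'K::field set \<Rightarrow> (nat \<Rightarrow> 'K) set \<Rightarrow> bool" where
  "subspace_over F W \<longleftrightarrow> (\<lambda>j. 0) \<in> W \<and> (\<forall>x\<in>W. \<forall>y\<in>W. (\<lambda>j. x j + y j) \<in> W) \<and>
     (\<forall>a\<in>F. \<forall>x\<in>W. (\<lambda>j. a * x j) \<in> W)"

lemma independent_overD:
  "independent_over F u k \<Longrightarrow> \<forall>i<k. t i \<in> F \<Longrightarrow> lin_comb t u k = (\<lambda>j. 0) \<Longrightarrow> i < k \<Longrightarrow> t i = 0"
  unfolding independent_over_def by blast

lemma lin_comb_Suc: "lin_comb t u (Suc k) = (\<lambda>j. lin_comb t u k j + t k * u k j)"
  by (simp add: lin_comb_def)

lemma lin_comb_cong: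
  "(\<And>i. i < k \<Longrightarrow> t i = t' i) \<Longrightarrow> (\<And>i. i < k \<Longrightarrow> u i = u' i) \<Longrightarrow> lin_comb t u k = lin_comb t' u' k"
  unfolding lin_comb_def by (intro ext sum.cong) auto

lemma lin_comb_diff: "lin_comb (\<lambda>i. t i - t' i) u k = (\<lambda>j. lin_comb t u k j - lin_comb t' u k j)"
  unfolding lin_comb_def by (simp add: sum_subtractf left_diff_distrib)

lemma lin_comb_in_subspace_over:
  assumes "subspace_over F W" and "\<forall>i<k. t i \<in> F" and "\<forall>i<k. u i \<in> W"
  shows "lin_comb t u k \<in> W"
  using assms(2,3)
proof (induction k)
  case 0
  then show ?case
    using assms(1) by (simp add: lin_comb_def subspace_over_def)
next
  case (Suc k)
  then show ?case
    using assms(1) unfolding lin_comb_Suc subspace_over_def by simp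
qed

lemma span_over_subset_subspace_over:
  "subspace_over F W \<Longrightarrow> \<forall>i<k. u i \<in> W \<Longrightarrow> span_over F u k \<subseteq> W"
  unfolding span_over_def by (auto intro: lin_comb_in_subspace_over)

lemma span_over_eq_image:
  "span_over F u k = (\<lambda>t. lin_comb t u k) ` PiE {..<k} (\<lambda>_. F)"
proof
  show "span_over F u k \<subseteq> (\<lambda>t. lin_comb t u k) ` PiE {..<k} (\<lambda>_. F)"
  proof
    fix x
    assume "x \<in> span_over F u k"
    then obtain t where t: "\<forall>i<k. t i \<in> F" and x: "x = lin_comb t u k"
      unfolding span_over_def by blast
    have "x = lin_comb (restrict t {..<k}) u k"
      unfolding x by (rule lin_comb_cong) simp_all
    moreover have "restrict t {..<k} \<in> PiE {..<k} (\<lambda>_. F)"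
      using t by simp
    ultimately show "x \<in> (\<lambda>t. lin_comb t u k) ` PiE {..<k} (\<lambda>_. F)"
      by blast
  qed
qed (auto simp: span_over_def PiE_def Pi_def)

lemma card_span_over:
  assumes "is_subfield F" and "independent_over F u k"
  shows "card (span_over F u k) = card F ^ k"
proof -
  have "inj_on (\<lambda>t. lin_comb t u k) (PiE {..<k} (\<lambda>_. F))"
  proof (rule inj_onI)
    fix t t'
    assume t: "t \<in> PiE {..<k} (\<lambda>_. F)" and t': "t' \<in> PiE {..<k} (\<lambda>_. F)"
      and eq: "lin_comb t u k = lin_comb t' u k"
    have "lin_comb (\<lambda>i. t i - t' i) u k = (\<lambda>j. 0)"
      unfolding lin_comb_diff eq by simp
    moreover have "\<forall>i<k. t i - t' i \<in> F"
      using t t' assms(1) by (auto intro: is_subfield_diff)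
    ultimately have "\<forall>i<k. t i - t' i = 0"
      using independent_overD[OF assms(2), of "\<lambda>i. t i - t' i"] by blast
    then show "t = t'"
      using PiE_ext[OF t t'] by simp
  qed
  then show ?thesis
    unfolding span_over_eq_image by (simp add: card_image card_PiE)
qed

lemma span_over_extend:
  assumes "is_subfield F"
  shows "insert w (span_over F u k) \<subseteq> span_over F (u(k := w)) (Suc k)"
proof (rule subsetI)
  fix x
  assume "x \<in> insert w (span_over F u k)"
  then consider "x = w" | t where "\<forall>i<k. t i \<in> F" "x = lin_comb t u k"
    unfolding span_over_def by blast
  then show "x \<in> span_over F (u(k := w)) (Suc k)"
  proof cases
    case 1
    let ?e = "\<lambda>i. if i = k then 1 else 0"
    have "lin_comb ?e (u(k := w)) (Suc k) = x"
      unfolding lin_comb_Suc 1 by (simp add: lin_comb_def)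
    moreover have "\<forall>i<Suc k. ?e i \<in> F"
      using assms by (simp add: is_subfield_zero is_subfield_one)
    ultimately show ?thesis
      unfolding span_over_def by blast
  next
    case 2
    have "lin_comb (t(k := 0)) (u(k := w)) k = lin_comb t u k"
      by (rule lin_comb_cong) simp_all
    then have "lin_comb (t(k := 0)) (u(k := w)) (Suc k) = x"
      unfolding lin_comb_Suc 2(2) by simp
    moreover have "\<forall>i<Suc k. (t(k := 0)) i \<in> F"
      using 2(1) assms by (simp add: is_subfield_zero less_Suc_eq)
    ultimately show ?thesis
      unfolding span_over_def by blast
  qed
qed

lemma independent_over_extend:
  assumes F: "is_subfield F" and ind: "independent_over F u k" and w: "w \<notin> span_over F u k"
  shows "independent_over F (u(k := w)) (Suc k)"
  unfolding independent_over_def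
proof (rule allI, rule impI)
  fix t
  assume "(\<forall>i<Suc k. t i \<in> F) \<and> lin_comb t (u(k := w)) (Suc k) = (\<lambda>j. 0)"
  then have tF: "\<forall>i<Suc k. t i \<in> F" and zero: "lin_comb t u k j + t k * w j = 0" for j
    by (auto simp: lin_comb_Suc lin_comb_cong[of k t t "u(k := w)" u] dest: fun_cong)
  have tk: "t k = 0"
  proof (rule ccontr)
    assume nz: "t k \<noteq> 0"
    have "w = lin_comb (\<lambda>i. - t i * inverse (t k)) u k"
    proof
      fix j
      have "w j = - lin_comb t u k j * inverse (t k)"
        using zero[of j] nz by (simp add: field_simps eq_neg_iff_add_eq_0)
      then show "w j = lin_comb (\<lambda>i. - t i * inverse (t k)) u k j"
        by (simp add: lin_comb_def sum_distrib_left sum_negf mult_ac)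
    qed
    moreover have "\<forall>i<k. - t i * inverse (t k) \<in> F"
      using tF F by (auto intro!: is_subfield_mult is_subfield_uminus is_subfield_inverse)
    ultimately show False
      using w unfolding span_over_def by blast
  qed
  then have "lin_comb t u k = (\<lambda>j. 0)"
    using zero by auto
  then have "\<forall>i<k. t i = 0"
    using independent_overD[OF ind] tF by simp
  with tk show "\<forall>i<Suc k. t i = 0"
    by (simp add: less_Suc_eq)
qed

lemma subspace_over_has_basis:
  assumes F: "is_subfield F" and fin: "finite W" and W: "subspace_over F W"
  shows "\<exists>k u. independent_over F u k \<and> span_over F u k = W \<and> (\<forall>i<k. u i \<in> W)"
proof -
  \<comment> \<open>grow an independent family inside W; card W - card (span) decreases\<close>
  have "\<exists>k u. independent_over F u k \<and> span_over F u k = W \<and> (\<forall>i<k. u i \<in> W)"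
    if "independent_over F u k" "\<forall>i<k. u i \<in> W" "card W - card (span_over F u k) = n" for n k u
    using that
  proof (induction n arbitrary: k u rule: less_induct)
    case (less n k u)
    show ?case
    proof (cases "span_over F u k = W")
      case True
      then show ?thesis
        using less.prems by blast
    next
      case False
      with span_over_subset_subspace_over[OF W less.prems(2)]
      obtain w where "w \<in> W" and w: "w \<notin> span_over F u k"
        by blast
      then have uW: "\<forall>i<Suc k. (u(k := w)) i \<in> W"
        using less.prems(2) by (simp add: less_Suc_eq)
      have sub: "span_over F (u(k := w)) (Suc k) \<subseteq> W"
        using span_over_subset_subspace_over[OF W uW] .
      have "span_over F u k \<subset> span_over F (u(k := w)) (Suc k)"
        using span_over_extend[OF F, of w u k] w by blast
      then have "card (span_over F u k) < card (span_over F (u(k := w)) (Suc k))"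
        using finite_subset[OF sub fin] by (rule psubset_card_mono[rotated])
      moreover have "card (span_over F (u(k := w)) (Suc k)) \<le> card W"
        using card_mono[OF fin sub] .
      ultimately have "card W - card (span_over F (u(k := w)) (Suc k)) < n"
        using less.prems(3) by linarith
      then show ?thesis
        using less.IH independent_over_extend[OF F less.prems(1) w] uW by blast
    qed
  qed
  moreover have "independent_over F (\<lambda>_ _. 0) 0"
    by (simp add: independent_over_def)
  ultimately show ?thesis
    by fastforce
qed

subsection \<open>The affine space\<close>

lemma AGpts_eq_image:
  "AGpts F d = (\<lambda>f j. if j < d then f j else 0) ` PiE {..<d} (\<lambda>_. F)"
proof
  show "AGpts F d \<subseteq> (\<lambda>f j. if j < d then f j else 0) ` PiE {..<d} (\<lambda>_. F)"
  proof
    fix v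
    assume v: "v \<in> AGpts F d"
    then have "v = (\<lambda>j. if j < d then restrict v {..<d} j else 0)"
      by (auto simp: AGpts_def)
    moreover have "restrict v {..<d} \<in> PiE {..<d} (\<lambda>_. F)"
      using v by (auto simp: AGpts_def)
    ultimately show "v \<in> (\<lambda>f j. if j < d then f j else 0) ` PiE {..<d} (\<lambda>_. F)"
      by blast
  qed
qed (auto simp: AGpts_def PiE_def Pi_def)

lemma finite_AGpts: "finite F \<Longrightarrow> finite (AGpts F d)"
  unfolding AGpts_eq_image by (simp add: finite_PiE)

lemma card_AGpts:
  assumes "finite F"
  shows "card (AGpts F d) = card F ^ d"
proof -
  have "inj_on (\<lambda>f j. if j < d then f j else 0) (PiE {..<d} (\<lambda>_. F))"
  proof (rule inj_onI)
    fix f g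
    assume f: "f \<in> PiE {..<d} (\<lambda>_. F)" and g: "g \<in> PiE {..<d} (\<lambda>_. F)"
      and eq: "(\<lambda>j. if j < d then f j else 0) = (\<lambda>j. if j < d then g j else 0)"
    show "f = g"
      using PiE_ext[OF f g] fun_cong[OF eq] by (metis lessThan_iff)
  qed
  then show ?thesis
    using assms unfolding AGpts_eq_image by (simp add: card_image card_PiE)
qed

lemma AGpts_add: "is_subfield F \<Longrightarrow> x \<in> AGpts F d \<Longrightarrow> y \<in> AGpts F d \<Longrightarrow> (\<lambda>j. x j + y j) \<in> AGpts F d"
  by (auto simp: AGpts_def intro: is_subfield_add)

lemma AGpts_diff: "is_subfield F \<Longrightarrow> x \<in> AGpts F d \<Longrightarrow> y \<in> AGpts F d \<Longrightarrow> (\<lambda>j. x j - y j) \<in> AGpts F d"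
  by (auto simp: AGpts_def intro: is_subfield_diff)

lemma subspace_over_linear_form_kernel:
  assumes "is_subfield F"
  shows "subspace_over F {w \<in> AGpts F d. (\<Sum>j<d. \<beta> j * w j) = 0}"
proof -
  have "(\<Sum>j<d. \<beta> j * (a * x j)) = a * (\<Sum>j<d. \<beta> j * x j)" for a x
    by (simp add: sum_distrib_left mult.left_commute)
  then show ?thesis
    using assms by (auto simp: subspace_over_def AGpts_def distrib_left sum.distrib
        intro: is_subfield_add is_subfield_mult is_subfield_zero)
qed

lemma affine_form_zeros_eq_translate:
  fixes \<beta> :: "nat \<Rightarrow> 'K::field"
  assumes F: "is_subfield F" and p: "p \<in> AGpts F d" and p0: "b0 + (\<Sum>j<d. \<beta> j * p j) = 0"
  shows "{v \<in> AGpts F d. b0 + (\<Sum>j<d. \<beta> j * v j) = 0} =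
    (\<lambda>w j. p j + w j) ` {w \<in> AGpts F d. (\<Sum>j<d. \<beta> j * w j) = 0}"
    (is "?Z = (\<lambda>w j. p j + w j) ` ?W")
proof
  show "?Z \<subseteq> (\<lambda>w j. p j + w j) ` ?W"
  proof
    fix v
    assume v: "v \<in> ?Z"
    have "(\<Sum>j<d. \<beta> j * (v j - p j)) = (\<Sum>j<d. \<beta> j * v j) - (\<Sum>j<d. \<beta> j * p j)"
      by (simp add: right_diff_distrib sum_subtractf)
    also have "\<dots> = 0"
      using v p0 by (metis (mono_tags, lifting) add_left_cancel diff_self mem_Collect_eq)
    finally have "(\<lambda>j. v j - p j) \<in> ?W"
      using AGpts_diff[OF F _ p] v by simp
    then show "v \<in> (\<lambda>w j. p j + w j) ` ?W"
      by (rule rev_image_eqI) simp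
  qed
next
  show "(\<lambda>w j. p j + w j) ` ?W \<subseteq> ?Z"
    using p0 AGpts_add[OF F p]
    by (auto simp: distrib_left sum.distrib add.assoc)
qed

lemma affine_subspace_codimI:
  assumes "m \<le> d" and "p \<in> AGpts F d"
    and "independent_over F u (d - m)" and "\<forall>i<d - m. u i \<in> AGpts F d"
  shows "affine_subspace_codim F d m ((\<lambda>w j. p j + w j) ` span_over F u (d - m))"
  unfolding affine_subspace_codim_def
proof (intro conjI exI)
  show "(\<lambda>w j. p j + w j) ` span_over F u (d - m) =
      {(\<lambda>j. p j + (\<Sum>i<d - m. t i * u i j)) |t. \<forall>i<d - m. t i \<in> F}"
    unfolding span_over_def lin_comb_def by (auto simp: setcompr_eq_image image_image)
qed (use assms in \<open>simp_all add: independent_over_def lin_comb_def\<close>)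

lemma affine_form_zeros_affine_subspace:
  fixes F :: "'K::field set" and b0 :: 'K and \<beta> :: "nat \<Rightarrow> 'K" and d m :: nat and Z
  defines "Z \<equiv> {v \<in> AGpts F d. b0 + (\<Sum>j<d. \<beta> j * v j) = 0}"
  assumes F: "is_subfield F" "finite F" and "m \<le> d" and card_Z: "card Z = card F ^ (d - m)"
  shows "affine_subspace_codim F d m Z"
proof -
  define W where "W = {w \<in> AGpts F d. (\<Sum>j<d. \<beta> j * w j) = 0}"
  have q: "2 \<le> card F"
    using card_is_subfield_ge_2[OF F] .
  then have "Z \<noteq> {}"
    using card_Z by auto
  then obtain p where p: "p \<in> AGpts F d" "b0 + (\<Sum>j<d. \<beta> j * p j) = 0"
    unfolding Z_def by blast
  have Z_eq: "Z = (\<lambda>w j. p j + w j) ` W"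
    unfolding Z_def W_def using affine_form_zeros_eq_translate[OF F(1) p] .
  have "finite W"
    unfolding W_def using finite_AGpts[OF F(2)] by simp
  then obtain k u where basis: "independent_over F u k" "span_over F u k = W" "\<forall>i<k. u i \<in> W"
    using subspace_over_has_basis[OF F(1)] subspace_over_linear_form_kernel[OF F(1)]
    unfolding W_def by blast
  have "inj_on (\<lambda>w j. p j + w j) W"
    by (rule inj_onI) (simp add: fun_eq_iff)
  then have "card W = card Z"
    unfolding Z_eq by (simp add: card_image)
  then have "card F ^ k = card F ^ (d - m)"
    using card_span_over[OF F(1) basis(1)] basis(2) card_Z by simp
  then have "k = d - m"
    using q by (simp add: power_inject_exp)
  then show ?thesis
    using affine_subspace_codimI[OF \<open>m \<le> d\<close> p(1), of u] basis Z_eq by (auto simp: W_def)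
qed

subsection \<open>Words of the extension code\<close>

lemma ext_code_RM_code_affine_form:
  assumes "c \<in> ext_code (RM_code F (Suc d))"
  obtains b0 \<beta> where "\<And>v. v \<in> AGpts F d \<Longrightarrow> c v = b0 + (\<Sum>j<d. \<beta> j * v j)"
proof -
  obtain S lam where "finite S" and S: "S \<subseteq> RM_code F (Suc d)" and c: "c = (\<lambda>v. \<Sum>x\<in>S. lam x * x v)"
    using assms by (auto simp: ext_code_def)
  have "\<exists>a. \<forall>v\<in>AGpts F d. x v = (\<Sum>j<Suc d. a j * Gmat j v)" if x: "x \<in> S" for x
  proof -
    obtain a where "x = (\<lambda>v. if v \<in> AGpts F d then (\<Sum>j<Suc d. a j * Gmat j v) else 0)"
      using S x by (auto simp: RM_code_def)
    then show ?thesis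
      by auto
  qed
  then obtain a where a: "\<And>x v. x \<in> S \<Longrightarrow> v \<in> AGpts F d \<Longrightarrow> x v = (\<Sum>j<Suc d. a x j * Gmat j v)"
    by metis
  define b where "b j = (\<Sum>x\<in>S. lam x * a x j)" for j
  have "c v = b 0 + (\<Sum>j<d. b (Suc j) * v j)" if v: "v \<in> AGpts F d" for v
  proof -
    have "c v = (\<Sum>x\<in>S. \<Sum>j<Suc d. lam x * a x j * Gmat j v)"
      unfolding c by (rule sum.cong) (simp_all add: a v distrib_left sum_distrib_left mult.assoc)
    also have "\<dots> = (\<Sum>j<Suc d. b j * Gmat j v)"
      unfolding b_def by (subst sum.swap) (simp add: sum_distrib_right)
    also have "\<dots> = b 0 + (\<Sum>j<d. b (Suc j) * v j)"
      unfolding sum.lessThan_Suc_shift by (simp add: Gmat_def)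
    finally show ?thesis .
  qed
  then show ?thesis
    by (rule that)
qed

lemma card_zeros_add_hweight:
  "finite P \<Longrightarrow> card {v \<in> P. c v = 0} + hweight P c = card P"
  unfolding hweight_def by (subst card_Un_disjoint[symmetric]) (auto intro: arg_cong[where f = card])

text \<open>For m > d the right-hand side lies strictly between q^d - 1 and q^d, so it is no integer.\<close>

lemma of_nat_eq_power_diff_power_int:
  fixes q w d m :: nat
  assumes q: "2 \<le> q" and "w \<le> q ^ d"
    and w: "real w = real q ^ d - real q powi (int d - int m)"
  shows "m \<le> d \<and> w + q ^ (d - m) = q ^ d"
proof -
  have "m \<le> d"
  proof (rule ccontr)
    assume "\<not> m \<le> d"
    then have "int d - int m = - int (m - d)"
      by simp
    then have "real q powi (int d - int m) = 1 / real q ^ (m - d)"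
      by (simp only: power_int_minus_divide power_int_of_nat)
    moreover have "q ^ 1 \<le> q ^ (m - d)"
      using q \<open>\<not> m \<le> d\<close> by (intro power_increasing) auto
    then have "2 \<le> real q ^ (m - d)"
      using q by (metis le_trans of_nat_le_iff of_nat_numeral of_nat_power power_one_right)
    ultimately have "0 < real (q ^ d - w)" "real (q ^ d - w) < 1"
      using w \<open>w \<le> q ^ d\<close> q by (simp_all add: of_nat_diff divide_less_eq)
    then have "0 < q ^ d - w" "q ^ d - w < 1"
      by (simp_all only: of_nat_0_less_iff of_nat_less_1_iff)
    then show False
      by linarith
  qed
  moreover have "int d - int m = int (d - m)"
    using \<open>m \<le> d\<close> by simp
  then have "real q powi (int d - int m) = real q ^ (d - m)"
    by (simp only: power_int_of_nat)
  then have "real (w + q ^ (d - m)) = real (q ^ d)"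
    using w by simp
  ultimately show ?thesis
    by (simp only: of_nat_eq_iff)
qed

theorem mainTheorem7:
  fixes F :: "'K::{field,finite} set" and q s m :: nat and c :: "(nat \<Rightarrow> 'K) \<Rightarrow> 'K"
  assumes "is_subfield F"
    and "card F = q"
    and "card (UNIV :: 'K set) = q ^ m"
    and "s \<ge> 1" and "m \<ge> 1"
    and "c \<in> ext_code (RM_code F s)"
    and "real (hweight (AGpts F (s - 1)) c) = real q ^ (s - 1) - real q powi (int (s - 1) - int m)"
  shows "\<exists>A. affine_subspace_codim F (s - 1) m A \<and> {v \<in> AGpts F (s - 1). c v = 0} = A"
proof -
  define d where "d = s - 1"
  have "c \<in> ext_code (RM_code F (Suc d))"
    using assms(4,6) by (simp add: d_def)
  then obtain b0 \<beta> where c: "\<And>v. v \<in> AGpts F d \<Longrightarrow> c v = b0 + (\<Sum>j<d. \<beta> j * v j)"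
    using ext_code_RM_code_affine_form by blast
  have fin: "finite (AGpts F d)" and card: "card (AGpts F d) = q ^ d"
    using finite_AGpts[of F] card_AGpts[of F] assms(2) by simp_all
  have zeros_weight: "card {v \<in> AGpts F d. c v = 0} + hweight (AGpts F d) c = q ^ d"
    using card_zeros_add_hweight[OF fin] card by simp
  have "m \<le> d" and weight: "hweight (AGpts F d) c + q ^ (d - m) = q ^ d"
    using of_nat_eq_power_diff_power_int[of q "hweight (AGpts F d) c" d m] assms(1,2,7) zeros_weight
      card_is_subfield_ge_2[of F] by (simp_all add: d_def)
  have zeros: "{v \<in> AGpts F d. c v = 0} = {v \<in> AGpts F d. b0 + (\<Sum>j<d. \<beta> j * v j) = 0}"
    using c by auto
  have card_zeros: "card {v \<in> AGpts F d. b0 + (\<Sum>j<d. \<beta> j * v j) = 0} = card F ^ (d - m)"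
    using zeros_weight weight assms(2) unfolding zeros by simp
  have "affine_subspace_codim F d m {v \<in> AGpts F d. c v = 0}"
    unfolding zeros by (rule affine_form_zeros_affine_subspace[OF assms(1) _ \<open>m \<le> d\<close> card_zeros]) simp
  then show ?thesis
    by (auto simp: d_def)
qed

end
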